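(* Let $C>0$ be given and suppose the following assumptions hold. (A1): there exist class-$\mathcal{K}_\infty$ functions $\underline{\eta},\overline{\eta}$ with $\underline{\eta}(|x-\bar x|)\le \ell^{\star}(x)\le\overline{\eta}(|x-\bar x|)$ for all $x\in X$. (A2): there exist $\gamma\in\mathbb{R}_{>0}$ and a neighbourhood $\mathcal{N}$ of $\bar x$ such that $V_\infty(x)\le\gamma\,\ell^{\star}(x)$ for all $x\in\mathcal{N}\cap X$. Let $M:=\inf_{x\in X\setminus\mathcal{N}}\ell^{\star}(x)$ and $\beta:=\max\{C/M,\gamma\}$. Let $\delta\in(0,\beta)$ and $N\in\mathbb{N}$, set $T:=N\delta$, and suppose (A3): there exists $\bar C\in\mathbb{R}_{>0}$ such that for all $\delta'\in(0,T]$: $\delta'\,\ell^{\star}(\hat x)\le\bar C\,V_{\delta'}(\hat x)$ for all $\hat x\in V_T^{-1}[0,C]$. If \[ \max\Big\{\frac{C}{M\delta},\ \bar C\Big(\frac{\beta}{\delta}\Big)^2\Big\}\cdot\Big(\frac{\beta}{\beta+\delta}\Big)^{N-1}<1, \] then, with $\alpha:=\bar C(\beta/\delta)^2\big(\beta/(\beta+\delta)\big)^{N-1}$, for every $\hat x\in V_T^{-1}[0,C]$ and every minimiser $u^\star\in\mathcal{U}_T(\hat x)$ of $J_T(\hat x,\cdot)$, \[ V_T\big(x(\delta;\hat x,u^\star)\big)\le V_T(\hat x)-(1-\alpha)\int_0^\delta \ell\big(x(s;\hat x,u^\star),u^\star(s)\big)\,\mathrm{d}s. \]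
   Context: Consider the control system $\dot x(t)=f(x(t),u(t))$, $x(0)=x_0$, with $f:\mathbb{R}^n\times\mathbb{R}^m\to\mathbb{R}^n$ continuous and locally Lipschitz in its first argument on $\mathbb{R}^n\setminus\{0\}$; for $u\in L^\infty_{\mathrm{loc}}(\mathbb{R}_{\ge0},\mathbb{R}^m)$ the unique (maximal) solution is denoted $x(t;x_0,u)$. A set $\mathcal{E}\subseteq\mathbb{R}^n\times\mathbb{R}^m$ defines the constraints $(x(t),u(t))\in\mathcal{E}$. Let $U(x):=\{u\in\mathbb{R}^m:(x,u)\in\mathcal{E}\}$ and $X:=\{x: U(x)\neq\emptyset\}$. For $x_0\in X$ and $T>0$, $\mathcal{U}_T(x_0)$ is the set of $u\in L^\infty_{\mathrm{loc}}(\mathbb{R}_{\ge0},\mathbb{R}^m)$ such that the solution exists and satisfies $(x(t;x_0,u),u(t))\in\mathcal{E}$ on $[0,T]$; $\mathcal{U}_\infty(x_0)$ is defined analogously for all $t\ge0$. The stage cost $\ell:\mathbb{R}^n\times\mathbb{R}^m\to\mathbb{R}_{\ge0}$ is continuous; $J_T(x_0,u):=\int_0^T\ell(x(s;x_0,u),u(s))\,\mathrm{d}s$, $V_T(x_0):=\inf_{u\in\mathcal{U}_T(x_0)}J_T(x_0,u)$ (with $V_T(x_0)=+\infty$ if $\mathcal{U}_T(x_0)=\emptyset$), and $V_\infty$ is defined analogously over $\mathcal{U}_\infty(x_0)$ with the integral over $[0,\infty)$. $V_T^{-1}[0,C]:=\{x\in X: V_T(x)\le C\}$. $\ell^{\star}(x):=\inf_{u\in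 U(x)}\ell(x,u)$. The point $\bar x\in X$ is a controlled equilibrium: there is $\bar u\in U(\bar x)$ with $f(\bar x,\bar u)=0$. It is a standing assumption that whenever $\mathcal{U}_T(x_0)\neq\emptyset$, a minimiser of $J_T(x_0,\cdot)$ over $\mathcal{U}_T(x_0)$ exists. (In the MPC scheme with sampling time $\delta$ and horizon $T=N\delta$, such a minimiser $u^\star$ for the measured state $\hat x$ is applied on $[0,\delta)$, so $x(\delta;\hat x,u^\star)$ is the next closed-loop state.) *)

theory Defs
  imports "HOL-Analysis.Analysis"
begin

definition class_K_inf :: "(real \<Rightarrow> real) \<Rightarrow> bool" where
  "class_K_inf \<eta> \<longleftrightarrow> continuous_on {0..} \<eta> \<and> \<eta> 0 = 0 \<and> strict_mono_on {0..} \<eta>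
     \<and> filterlim \<eta> at_top at_top"

definition Linf_loc :: "(real \<Rightarrow> 'b::euclidean_space) \<Rightarrow> bool" where
  "Linf_loc u \<longleftrightarrow> set_borel_measurable lborel {0..} u \<and>
     (\<forall>T. \<exists>B. AE t in lborel. t \<in> {0..T} \<longrightarrow> norm (u t) \<le> B)"

text \<open>x is a (Caratheodory) solution of x' = f(x,u), x(0)=x0 on [0,T].\<close>
definition is_sol :: "('a::euclidean_space \<Rightarrow> 'b \<Rightarrow> 'a) \<Rightarrow> 'a \<Rightarrow> (real \<Rightarrow> 'b)
     \<Rightarrow> real \<Rightarrow> (real \<Rightarrow> 'a) \<Rightarrow> bool" where
  "is_sol f x0 u T x \<longleftrightarrow>
     (\<forall>t\<in>{0..T}. ((\<lambda>s. f (x s) (u s)) has_integral (x t - x0)) {0..t})"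

definition traj :: "('a::euclidean_space \<Rightarrow> 'b \<Rightarrow> 'a) \<Rightarrow> 'a \<Rightarrow> (real \<Rightarrow> 'b) \<Rightarrow> real \<Rightarrow> 'a" where
  "traj f x0 u t = (THE y. \<exists>x. is_sol f x0 u t x \<and> x t = y)"

definition Uset :: "('a \<times> 'b) set \<Rightarrow> 'a \<Rightarrow> 'b set" where
  "Uset E x = {u. (x, u) \<in> E}"

definition Xset :: "('a \<times> 'b) set \<Rightarrow> 'a set" where
  "Xset E = {x. Uset E x \<noteq> {}}"

definition adm :: "('a::euclidean_space \<Rightarrow> 'b::euclidean_space \<Rightarrow> 'a) \<Rightarrow> ('a \<times> 'b) set
     \<Rightarrow> real \<Rightarrow> 'a \<Rightarrow> (real \<Rightarrow> 'b) set" where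
  "adm f E T x0 = {u. Linf_loc u \<and>
     (\<exists>x. is_sol f x0 u T x \<and> (\<forall>t\<in>{0..T}. (x t, u t) \<in> E))}"

definition adm_inf :: "('a::euclidean_space \<Rightarrow> 'b::euclidean_space \<Rightarrow> 'a) \<Rightarrow> ('a \<times> 'b) set
     \<Rightarrow> 'a \<Rightarrow> (real \<Rightarrow> 'b) set" where
  "adm_inf f E x0 = {u. Linf_loc u \<and>
     (\<forall>T\<ge>0. \<exists>x. is_sol f x0 u T x \<and> (\<forall>t\<in>{0..T}. (x t, u t) \<in> E))}"

definition Jcost :: "('a::euclidean_space \<Rightarrow> 'b::euclidean_space \<Rightarrow> 'a) \<Rightarrow> ('a \<Rightarrow> 'b \<Rightarrow> real)
     \<Rightarrow> real \<Rightarrow> 'a \<Rightarrow> (real \<Rightarrow> 'b) \<Rightarrow> ennreal" where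
  "Jcost f l T x0 u = (\<integral>\<^sup>+ s \<in> {0..T}. ennreal (l (traj f x0 u s) (u s)) \<partial>lborel)"

definition Jcost_inf :: "('a::euclidean_space \<Rightarrow> 'b::euclidean_space \<Rightarrow> 'a) \<Rightarrow> ('a \<Rightarrow> 'b \<Rightarrow> real)
     \<Rightarrow> 'a \<Rightarrow> (real \<Rightarrow> 'b) \<Rightarrow> ennreal" where
  "Jcost_inf f l x0 u = (\<integral>\<^sup>+ s \<in> {0..}. ennreal (l (traj f x0 u s) (u s)) \<partial>lborel)"

text \<open>Value functions (infimum over the empty set is +infinity = top).\<close>
definition Vfun :: "('a::euclidean_space \<Rightarrow> 'b::euclidean_space \<Rightarrow> 'a) \<Rightarrow> ('a \<times> 'b) set
     \<Rightarrow> ('a \<Rightarrow> 'b \<Rightarrow> real) \<Rightarrow> real \<Rightarrow> 'a \<Rightarrow> ennreal" where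
  "Vfun f E l T x0 = (INF u \<in> adm f E T x0. Jcost f l T x0 u)"

definition Vfun_inf :: "('a::euclidean_space \<Rightarrow> 'b::euclidean_space \<Rightarrow> 'a) \<Rightarrow> ('a \<times> 'b) set
     \<Rightarrow> ('a \<Rightarrow> 'b \<Rightarrow> real) \<Rightarrow> 'a \<Rightarrow> ennreal" where
  "Vfun_inf f E l x0 = (INF u \<in> adm_inf f E x0. Jcost_inf f l x0 u)"

definition sublevel :: "('a::euclidean_space \<Rightarrow> 'b::euclidean_space \<Rightarrow> 'a) \<Rightarrow> ('a \<times> 'b) set
     \<Rightarrow> ('a \<Rightarrow> 'b \<Rightarrow> real) \<Rightarrow> real \<Rightarrow> real \<Rightarrow> 'a set" where
  "sublevel f E l T C = {x \<in> Xset E. Vfun f E l T x \<le> ennreal C}"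

definition ellstar :: "('a \<times> 'b) set \<Rightarrow> ('a \<Rightarrow> 'b \<Rightarrow> real) \<Rightarrow> 'a \<Rightarrow> real" where
  "ellstar E l x = Inf (l x ` Uset E x)"

end

theory Submission
  imports Defs
begin

text \<open>Let W(s) be the cost of the optimal input u* on [s, T], so that V_T(xh) = W(0).
  Tails of optimal inputs are optimal, so W(s) \<le> V_(T-s)(x(s)) \<le> V_inf(x(s)) \<le> gamma l*(x(s))
  while x(s) lies in N, and W(s) \<le> C \<le> CM l*(x(s)) outside N; either way
  W(s) \<le> beta l(x(s), u*(s)). Averaging this over a sampling interval gives
  W(s + delta) \<le> beta / (beta + delta) W(s), hence W(T - delta) \<le> (beta / (beta + delta))^(N-1) beta l*(xh).
  On the last interval [T - delta, T] the stage cost therefore drops at some time s to its mean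
  W(T - delta) / delta. The condition on N puts x(s) into N and, together with (A3), gives
  gamma l*(x(s)) \<le> alpha J_delta(xh, u*). Restarting at x(delta), following u* up to time s and
  then an almost optimal infinite-horizon input yields
  V_T(x(delta)) \<le> W(delta) + V_inf(x(s)) \<le> W(delta) + alpha J_delta(xh, u*),
  which is the claim because V_T(xh) = J_delta(xh, u*) + W(delta). For N = 1 no such s \<ge> delta exists;
  there the condition forces l*(xh) = 0 and the optimal trajectory stays at xbar.\<close>

section \<open>Solutions and admissible inputs\<close>

lemma is_sol_restrict: "is_sol f x0 u T x \<Longrightarrow> t \<le> T \<Longrightarrow> is_sol f x0 u t x"
  by (auto simp: is_sol_def)

lemma is_sol_initial: assumes "is_sol f x0 u T x" "0 \<le> T" shows "x 0 = x0"
proof -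
  have "((\<lambda>s. f (x s) (u s)) has_integral (x 0 - x0)) {0..0}"
    using assms unfolding is_sol_def by (meson atLeastAtMost_iff order_refl)
  then have "x 0 - x0 = integral {0..0} (\<lambda>s. f (x s) (u s))"
    by (rule integral_unique[symmetric])
  then show ?thesis by simp
qed

lemma is_sol_continuous: assumes "is_sol f x0 u T x" shows "continuous_on {0..T} x"
proof -
  let ?F = "\<lambda>s. f (x s) (u s)"
  have "?F integrable_on {0..T}"
    using assms by (cases "0 \<le> T") (auto simp: is_sol_def)
  then have "continuous_on {0..T} (\<lambda>t. x0 + integral {0..t} ?F)"
    by (intro continuous_intros indefinite_integral_continuous_1)
  moreover have "x0 + integral {0..t} ?F = x t" if "t \<in> {0..T}" for t
  proof -
    have "(?F has_integral (x t - x0)) {0..t}"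
      using assms that unfolding is_sol_def by blast
    then show ?thesis by (simp add: integral_unique)
  qed
  ultimately show ?thesis
    by (rule continuous_on_eq)
qed

lemma is_sol_shift:
  assumes "is_sol f x0 u T x" "0 \<le> a" "a \<le> T"
  shows "is_sol f (x a) (\<lambda>t. u (t + a)) (T - a) (\<lambda>t. x (t + a))"
  unfolding is_sol_def
proof
  fix t assume t: "t \<in> {0..T - a}"
  let ?F = "\<lambda>s. f (x s) (u s)"
  have whole: "(?F has_integral (x (t + a) - x0)) {0..t + a}"
    and head: "(?F has_integral (x a - x0)) {0..a}"
    using assms t unfolding is_sol_def by auto
  have "?F integrable_on {a..t + a}"
    using integrable_subinterval_real[OF has_integral_integrable[OF whole]] assms by auto
  then have tail: "(?F has_integral integral {a..t + a} ?F) {a..t + a}" by auto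
  have "(?F has_integral (x a - x0 + integral {a..t + a} ?F)) {0..t + a}"
    by (rule has_integral_combine[OF _ _ head tail]) (use t assms in auto)
  then have "integral {a..t + a} ?F = x (t + a) - x a"
    using has_integral_unique[OF whole] by (simp add: algebra_simps)
  with tail have "(?F has_integral (x (t + a) - x a)) {a..t + a}" by simp
  from has_integral_shift_real_ivl[OF this, of a]
  show "((\<lambda>s. f (x (s + a)) (u (s + a))) has_integral (x (t + a) - x a)) {0..t}" by simp
qed

lemma is_sol_append:
  assumes u: "is_sol f x0 u a x" and v: "is_sol f (x a) v b y" and "0 \<le> a" "0 \<le> b"
  shows "is_sol f x0 (\<lambda>t. if t < a then u t else v (t - a)) (a + b)
           (\<lambda>t. if t \<le> a then x t else y (t - a))"
  unfolding is_sol_def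
proof
  let ?F = "\<lambda>s. f (if s \<le> a then x s else y (s - a)) (if s < a then u s else v (s - a))"
  have head: "(?F has_integral (x t - x0)) {0..t}" if "0 \<le> t" "t \<le> a" for t
  proof (rule has_integral_spike[OF negligible_sing[of a]])
    show "((\<lambda>s. f (x s) (u s)) has_integral (x t - x0)) {0..t}"
      using u that unfolding is_sol_def by auto
  qed (use that in auto)
  fix t assume t: "t \<in> {0..a + b}"
  show "(?F has_integral ((if t \<le> a then x t else y (t - a)) - x0)) {0..t}"
  proof (cases "t \<le> a")
    case False
    have "((\<lambda>s. f (y s) (v s)) has_integral (y (t - a) - x a)) {0..t - a}"
      using v t False unfolding is_sol_def by auto
    from has_integral_shift_real_ivl[OF this, of "-a"]
    have "((\<lambda>s. f (y (s - a)) (v (s - a))) has_integral (y (t - a) - x a)) {a..t}" by simp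
    then have tail: "(?F has_integral (y (t - a) - x a)) {a..t}"
      by (rule has_integral_spike[OF negligible_sing[of a], rotated]) auto
    have "(?F has_integral (x a - x0 + (y (t - a) - x a))) {0..t}"
      by (rule has_integral_combine[OF _ _ head[of a] tail]) (use assms False in auto)
    then show ?thesis using False by simp
  qed (use head t in auto)
qed

lemma AE_lborel_shift:
  assumes "AE t in lborel. P t" shows "AE t in lborel. P (t + a)"
proof -
  obtain Z where Z: "\<And>t. t \<in> space lborel - Z \<Longrightarrow> P t" "Z \<in> null_sets lborel"
    using AE_E3[OF assms] by blast
  have "{t. t - (-a) \<in> Z} \<in> null_sets lborel"
    by (rule null_sets_translation[OF Z(2)])
  then show ?thesis
    by (rule AE_I') (use Z(1) in force)
qed

lemma Linf_loc_measurable: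
  "Linf_loc u \<Longrightarrow> (\<lambda>t. indicator {0..} t *\<^sub>R u t) \<in> borel_measurable borel"
  by (simp add: Linf_loc_def set_borel_measurable_def)

lemma Linf_loc_shift:
  assumes "Linf_loc u" "0 \<le> a" shows "Linf_loc (\<lambda>t. u (t + a))"
  unfolding Linf_loc_def
proof
  have [measurable]: "(\<lambda>t. indicator {0..} t *\<^sub>R u t) \<in> borel_measurable borel"
    using Linf_loc_measurable[OF assms(1)] .
  have "(\<lambda>t. indicator {0..} t *\<^sub>R (indicator {0..} (t + a) *\<^sub>R u (t + a))) \<in> borel_measurable borel"
    by measurable
  also have "(\<lambda>t. indicator {0..} t *\<^sub>R (indicator {0..} (t + a) *\<^sub>R u (t + a)))
      = (\<lambda>t. indicator {0..} t *\<^sub>R u (t + a))"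
    using assms(2) by (auto simp: indicator_def)
  finally show "set_borel_measurable lborel {0..} (\<lambda>t. u (t + a))"
    by (simp add: set_borel_measurable_def)
  show "\<forall>T. \<exists>B. AE t in lborel. t \<in> {0..T} \<longrightarrow> norm (u (t + a)) \<le> B"
  proof
    fix T
    obtain B where "AE t in lborel. t \<in> {0..T + a} \<longrightarrow> norm (u t) \<le> B"
      using assms(1) unfolding Linf_loc_def by blast
    from AE_lborel_shift[OF this, of a]
    have "AE t in lborel. t \<in> {0..T} \<longrightarrow> norm (u (t + a)) \<le> B"
      by eventually_elim (use assms(2) in auto)
    then show "\<exists>B. AE t in lborel. t \<in> {0..T} \<longrightarrow> norm (u (t + a)) \<le> B" ..
  qed
qed

lemma Linf_loc_append:
  assumes "Linf_loc u" "Linf_loc v" "0 \<le> a"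
  shows "Linf_loc (\<lambda>t. if t < a then u t else v (t - a))"
  unfolding Linf_loc_def
proof
  have [measurable]: "(\<lambda>t. indicator {0..} t *\<^sub>R u t) \<in> borel_measurable borel"
    "(\<lambda>t. indicator {0..} t *\<^sub>R v t) \<in> borel_measurable borel"
    using Linf_loc_measurable assms(1,2) by auto
  have "(\<lambda>t. if t < a then indicator {0..} t *\<^sub>R u t else indicator {0..} (t - a) *\<^sub>R v (t - a))
      \<in> borel_measurable borel"
    by measurable
  also have "(\<lambda>t. if t < a then indicator {0..} t *\<^sub>R u t else indicator {0..} (t - a) *\<^sub>R v (t - a))
      = (\<lambda>t. indicator {0..} t *\<^sub>R (if t < a then u t else v (t - a)))"
    using assms(3) by (auto simp: indicator_def)
  finally show "set_borel_measurable lborel {0..} (\<lambda>t. if t < a then u t else v (t - a))"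
    by (simp add: set_borel_measurable_def)
  show "\<forall>T. \<exists>B. AE t in lborel. t \<in> {0..T} \<longrightarrow> norm (if t < a then u t else v (t - a)) \<le> B"
  proof
    fix T
    obtain Bu where "AE t in lborel. t \<in> {0..T} \<longrightarrow> norm (u t) \<le> Bu"
      using assms(1) unfolding Linf_loc_def by blast
    moreover obtain Bv where "AE t in lborel. t \<in> {0..T} \<longrightarrow> norm (v t) \<le> Bv"
      using assms(2) unfolding Linf_loc_def by blast
    from AE_lborel_shift[OF this, of "-a"]
    have "AE t in lborel. t - a \<in> {0..T} \<longrightarrow> norm (v (t - a)) \<le> Bv" by simp
    ultimately have "AE t in lborel. t \<in> {0..T} \<longrightarrow>
        norm (if t < a then u t else v (t - a)) \<le> max Bu Bv"
      by eventually_elim (use assms(3) in auto)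
    then show "\<exists>B. AE t in lborel. t \<in> {0..T} \<longrightarrow> norm (if t < a then u t else v (t - a)) \<le> B" ..
  qed
qed

lemma adm_mono: "u \<in> adm f E T x0 \<Longrightarrow> t \<le> T \<Longrightarrow> u \<in> adm f E t x0"
  unfolding adm_def using is_sol_restrict by fastforce

lemma adm_inf_imp_adm: "v \<in> adm_inf f E x0 \<Longrightarrow> 0 \<le> T \<Longrightarrow> v \<in> adm f E T x0"
  unfolding adm_def adm_inf_def by blast

section \<open>Nonnegative integrals over intervals\<close>

lemma set_borel_measurable_ennreal:
  fixes g :: "real \<Rightarrow> real"
  assumes "set_borel_measurable lborel S g"
  shows "(\<lambda>s. ennreal (g s) * indicator S s) \<in> borel_measurable borel"
proof -
  have "(\<lambda>s. ennreal (indicator S s *\<^sub>R g s)) \<in> borel_measurable borel"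
    using assms by (simp add: set_borel_measurable_def)
  also have "(\<lambda>s. ennreal (indicator S s *\<^sub>R g s)) = (\<lambda>s. ennreal (g s) * indicator S s)"
    by (auto split: split_indicator)
  finally show ?thesis .
qed

lemma set_nn_integral_interval_split:
  fixes g :: "real \<Rightarrow> real"
  assumes "set_borel_measurable lborel {a..c} g" "a \<le> b" "b \<le> c"
  shows "(\<integral>\<^sup>+ s\<in>{a..c}. ennreal (g s) \<partial>lborel)
       = (\<integral>\<^sup>+ s\<in>{a..b}. ennreal (g s) \<partial>lborel) + (\<integral>\<^sup>+ s\<in>{b..c}. ennreal (g s) \<partial>lborel)"
proof -
  let ?H = "\<lambda>s. ennreal (g s) * indicator {a..c} s"
  have [measurable]: "?H \<in> borel_measurable borel"
    by (rule set_borel_measurable_ennreal[OF assms(1)])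
  have "(\<integral>\<^sup>+ s\<in>{a..c}. ennreal (g s) \<partial>lborel)
      = (\<integral>\<^sup>+ s. ?H s * indicator {a..b} s + ?H s * indicator {b<..c} s \<partial>lborel)"
    by (rule nn_integral_cong) (use assms in \<open>auto split: split_indicator\<close>)
  also have "\<dots> = (\<integral>\<^sup>+ s. ?H s * indicator {a..b} s \<partial>lborel) + (\<integral>\<^sup>+ s. ?H s * indicator {b<..c} s \<partial>lborel)"
    by (rule nn_integral_add) measurable
  also have "(\<integral>\<^sup>+ s. ?H s * indicator {a..b} s \<partial>lborel) = (\<integral>\<^sup>+ s\<in>{a..b}. ennreal (g s) \<partial>lborel)"
    by (rule nn_integral_cong) (use assms in \<open>auto split: split_indicator\<close>)
  also have "(\<integral>\<^sup>+ s. ?H s * indicator {b<..c} s \<partial>lborel) = (\<integral>\<^sup>+ s\<in>{b..c}. ennreal (g s) \<partial>lborel)"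
  proof (rule nn_integral_cong_AE)
    show "AE s in lborel. ?H s * indicator {b<..c} s = ennreal (g s) * indicator {b..c} s"
      using AE_lborel_singleton[of b]
      by eventually_elim (use assms in \<open>auto split: split_indicator\<close>)
  qed
  finally show ?thesis .
qed

(* Averaging the bound over [a, a + delta]:
   delta W(a + delta) \<le> integral of W over [a, a + delta] \<le> beta (W(a) - W(a + delta)). *)
lemma tail_integral_contraction:
  fixes g :: "real \<Rightarrow> real"
  assumes meas: "set_borel_measurable lborel {a..T} g"
    and bound: "\<And>s. a \<le> s \<Longrightarrow> s \<le> T \<Longrightarrow>
                  (\<integral>\<^sup>+ r\<in>{s..T}. ennreal (g r) \<partial>lborel) \<le> ennreal (beta * g s)"
    and "0 < beta" "0 < delta" "a + delta \<le> T"
  shows "(\<integral>\<^sup>+ r\<in>{a + delta..T}. ennreal (g r) \<partial>lborel)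
       \<le> ennreal (beta / (beta + delta)) * (\<integral>\<^sup>+ r\<in>{a..T}. ennreal (g r) \<partial>lborel)"
proof -
  define W where "W s = (\<integral>\<^sup>+ r\<in>{s..T}. ennreal (g r) \<partial>lborel)" for s
  define I where "I = (\<integral>\<^sup>+ r\<in>{a..a + delta}. ennreal (g r) \<partial>lborel)"
  have split: "W a = I + W (a + delta)"
    unfolding W_def I_def
    by (rule set_nn_integral_interval_split[OF meas]) (use assms in auto)
  have "ennreal delta * W (a + delta) = (\<integral>\<^sup>+ r. W (a + delta) * indicator {a..a + delta} r \<partial>lborel)"
    using assms by (simp add: nn_integral_cmult_indicator mult.commute)
  also have "\<dots> \<le> (\<integral>\<^sup>+ r\<in>{a..a + delta}. W r \<partial>lborel)"
  proof (intro nn_integral_mono)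
    have "W (a + delta) \<le> W r" if "r \<le> a + delta" for r
      unfolding W_def using that by (intro nn_integral_mono) (auto split: split_indicator)
    then show "\<And>r. W (a + delta) * indicator {a..a + delta} r \<le> W r * indicator {a..a + delta} r"
      by (auto split: split_indicator)
  qed
  also have "\<dots> \<le> (\<integral>\<^sup>+ r\<in>{a..a + delta}. ennreal beta * ennreal (g r) \<partial>lborel)"
    unfolding W_def using bound assms
    by (intro nn_integral_mono) (auto split: split_indicator simp: ennreal_mult')
  also have "\<dots> = ennreal beta * I"
  proof -
    have "set_borel_measurable lborel {a..a + delta} g"
      by (rule set_borel_measurable_subset[OF meas]) (use assms in auto)
    from set_borel_measurable_ennreal[OF this] show ?thesis
      unfolding I_def mult.assoc by (simp add: nn_integral_cmult)
  qed
  finally have "ennreal delta * W (a + delta) \<le> ennreal beta * I" .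
  then have "ennreal (beta + delta) * W (a + delta) \<le> ennreal beta * W a"
    using assms by (simp add: split ennreal_plus distrib_left distrib_right add_mono)
  then have "ennreal (1 / (beta + delta)) * (ennreal (beta + delta) * W (a + delta))
      \<le> ennreal (1 / (beta + delta)) * (ennreal beta * W a)"
    by (rule mult_left_mono) simp
  moreover have "ennreal (1 / (beta + delta)) * ennreal (beta + delta) = 1"
    and "ennreal (1 / (beta + delta)) * ennreal beta = ennreal (beta / (beta + delta))"
    using assms by (subst ennreal_mult[symmetric]; simp)+
  ultimately show ?thesis
    unfolding W_def by (simp add: mult.assoc[symmetric])
qed

lemma tail_integral_geometric_decay:
  fixes g :: "real \<Rightarrow> real"
  assumes meas: "set_borel_measurable lborel {0..T} g"
    and bound: "\<And>s. 0 \<le> s \<Longrightarrow> s \<le> T \<Longrightarrow>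
                  (\<integral>\<^sup>+ r\<in>{s..T}. ennreal (g r) \<partial>lborel) \<le> ennreal (beta * g s)"
    and "0 < beta" "0 < delta"
  shows "real k * delta \<le> T \<Longrightarrow> (\<integral>\<^sup>+ r\<in>{real k * delta..T}. ennreal (g r) \<partial>lborel)
       \<le> ennreal ((beta / (beta + delta)) ^ k) * (\<integral>\<^sup>+ r\<in>{0..T}. ennreal (g r) \<partial>lborel)"
proof (induction k)
  case (Suc k)
  let ?\<rho> = "beta / (beta + delta)"
  have k: "0 \<le> real k * delta" "real k * delta + delta \<le> T"
    using Suc.prems assms by (auto simp: algebra_simps)
  have bound_k: "(\<integral>\<^sup>+ r\<in>{s..T}. ennreal (g r) \<partial>lborel) \<le> ennreal (beta * g s)"
    if "real k * delta \<le> s" "s \<le> T" for s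
  proof (rule bound)
    show "0 \<le> s" using k(1) that(1) by linarith
  qed (rule that(2))
  have "(\<integral>\<^sup>+ r\<in>{real k * delta + delta..T}. ennreal (g r) \<partial>lborel)
      \<le> ennreal ?\<rho> * (\<integral>\<^sup>+ r\<in>{real k * delta..T}. ennreal (g r) \<partial>lborel)"
    by (rule tail_integral_contraction[OF set_borel_measurable_subset[OF meas] bound_k])
      (use assms k in auto)
  also have "\<dots> \<le> ennreal ?\<rho> * (ennreal (?\<rho> ^ k) * (\<integral>\<^sup>+ r\<in>{0..T}. ennreal (g r) \<partial>lborel))"
  proof (rule mult_left_mono)
    have "real k * delta \<le> T" using k assms by linarith
    then show "(\<integral>\<^sup>+ r\<in>{real k * delta..T}. ennreal (g r) \<partial>lborel)
        \<le> ennreal (?\<rho> ^ k) * (\<integral>\<^sup>+ r\<in>{0..T}. ennreal (g r) \<partial>lborel)"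
      by (rule Suc.IH)
  qed simp
  finally have "(\<integral>\<^sup>+ r\<in>{real k * delta + delta..T}. ennreal (g r) \<partial>lborel)
      \<le> ennreal ?\<rho> * (ennreal (?\<rho> ^ k) * (\<integral>\<^sup>+ r\<in>{0..T}. ennreal (g r) \<partial>lborel))" .
  moreover have "0 \<le> ?\<rho>" and "real (Suc k) * delta = real k * delta + delta"
    using assms by (auto simp: algebra_simps)
  ultimately show ?case
    by (simp only: power_Suc ennreal_mult zero_le_power mult.assoc)
qed simp

lemma ex_le_of_set_nn_integral_le:
  fixes g :: "real \<Rightarrow> real"
  assumes meas: "set_borel_measurable lborel {a..b} g" and "a < b" "0 \<le> c"
    and int: "(\<integral>\<^sup>+ r\<in>{a..b}. ennreal (g r) \<partial>lborel) \<le> ennreal (c * (b - a))"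
  shows "\<exists>s\<in>{a..b}. g s \<le> c"
proof (rule ccontr)
  assume none: "\<not> (\<exists>s\<in>{a..b}. g s \<le> c)"
  have gt: "c < g s" and ge: "c \<le> g s" if "s \<in> {a..b}" for s
    using none that by (meson not_le less_imp_le)+
  have "(\<integral>\<^sup>+ r. ennreal c * indicator {a..b} r \<partial>lborel) < (\<integral>\<^sup>+ r\<in>{a..b}. ennreal (g r) \<partial>lborel)"
  proof (rule nn_integral_less)
    show "(\<lambda>r. ennreal (g r) * indicator {a..b} r) \<in> borel_measurable lborel"
      using set_borel_measurable_ennreal[OF meas] by simp
    show "(\<integral>\<^sup>+ r. ennreal c * indicator {a..b} r \<partial>lborel) \<noteq> \<infinity>"
      using \<open>a < b\<close> by (simp add: nn_integral_cmult_indicator ennreal_mult_eq_top_iff)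
    show "AE r in lborel. ennreal c * indicator {a..b} r \<le> ennreal (g r) * indicator {a..b} r"
      using ge by (intro AE_I2) (auto split: split_indicator intro!: ennreal_leI)
    show "\<not> (AE r in lborel. ennreal (g r) * indicator {a..b} r \<le> ennreal c * indicator {a..b} r)"
    proof
      assume "AE r in lborel. ennreal (g r) * indicator {a..b} r \<le> ennreal c * indicator {a..b} r"
      then have "AE r in lborel. r \<notin> {a..b}"
      proof eventually_elim
        case (elim r)
        show "r \<notin> {a..b}"
        proof
          assume r: "r \<in> {a..b}"
          with elim have "g r \<le> c" using \<open>0 \<le> c\<close> by (simp add: ennreal_le_iff)
          with gt[OF r] show False by simp
        qed
      qed
      then have "{a..b} \<in> null_sets lborel"
        by (subst AE_iff_null_sets) auto
      with \<open>a < b\<close> show False by (auto simp: null_sets_def)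
    qed
  qed simp
  with int assms show False
    by (simp add: nn_integral_cmult_indicator ennreal_mult)
qed

section \<open>Costs and value functions\<close>

lemma Vfun_le_Jcost: "u \<in> adm f E T x0 \<Longrightarrow> Vfun f E l T x0 \<le> Jcost f l T x0 u"
  unfolding Vfun_def by (rule INF_lower)

lemma Jcost_mono: "a \<le> T \<Longrightarrow> Jcost f l a x0 u \<le> Jcost f l T x0 u"
  unfolding Jcost_def by (intro nn_integral_mono) (auto split: split_indicator)

lemma Jcost_le_Jcost_inf: "Jcost f l T x0 u \<le> Jcost_inf f l x0 u"
  unfolding Jcost_def Jcost_inf_def by (intro nn_integral_mono) (auto split: split_indicator)

lemma Vfun_le_Vfun_inf: "0 \<le> T \<Longrightarrow> Vfun f E l T x0 \<le> Vfun_inf f E l x0"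
  unfolding Vfun_def Vfun_inf_def
  by (rule INF_mono) (use adm_inf_imp_adm Jcost_le_Jcost_inf in blast)

definition tail_cost :: "('a::euclidean_space \<Rightarrow> 'b::euclidean_space \<Rightarrow> 'a) \<Rightarrow> ('a \<Rightarrow> 'b \<Rightarrow> real)
    \<Rightarrow> real \<Rightarrow> 'a \<Rightarrow> (real \<Rightarrow> 'b) \<Rightarrow> real \<Rightarrow> ennreal" where
  "tail_cost f l T x0 u s = (\<integral>\<^sup>+ r\<in>{s..T}. ennreal (l (traj f x0 u r) (u r)) \<partial>lborel)"

lemma tail_cost_antimono: "a \<le> b \<Longrightarrow> tail_cost f l T x0 u b \<le> tail_cost f l T x0 u a"
  unfolding tail_cost_def by (intro nn_integral_mono) (auto split: split_indicator)

locale optimal_control =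
  fixes f :: "'a::euclidean_space \<Rightarrow> 'b::euclidean_space \<Rightarrow> 'a" and E :: "('a \<times> 'b) set"
    and l :: "'a \<Rightarrow> 'b \<Rightarrow> real"
  assumes uniq: "\<And>x0 u T x y. Linf_loc u \<Longrightarrow> is_sol f x0 u T x \<Longrightarrow> is_sol f x0 u T y
                 \<Longrightarrow> \<forall>t\<in>{0..T}. x t = y t"
    and l_cont: "continuous_on UNIV (\<lambda>(x, u). l x u)"
    and l_nonneg: "\<And>x u. l x u \<ge> 0"
begin

lemma traj_eq:
  assumes "Linf_loc u" "is_sol f x0 u T x" "0 \<le> t" "t \<le> T"
  shows "traj f x0 u t = x t"
  unfolding traj_def
proof (rule the_equality)
  show "\<exists>x'. is_sol f x0 u t x' \<and> x' t = x t"
    using is_sol_restrict[OF assms(2,4)] by blast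
next
  fix y assume "\<exists>x'. is_sol f x0 u t x' \<and> x' t = y"
  then obtain x' where "is_sol f x0 u t x'" "x' t = y" by blast
  with uniq[OF assms(1) this(1) is_sol_restrict[OF assms(2,4)]] assms(3)
  show "y = x t" by auto
qed

lemma admE:
  assumes "u \<in> adm f E T x0"
  obtains x where "Linf_loc u" "is_sol f x0 u T x" "\<And>t. 0 \<le> t \<Longrightarrow> t \<le> T \<Longrightarrow> traj f x0 u t = x t"
    "\<And>t. 0 \<le> t \<Longrightarrow> t \<le> T \<Longrightarrow> (x t, u t) \<in> E"
  using assms traj_eq unfolding adm_def by auto

lemma traj_mem_E: "u \<in> adm f E T x0 \<Longrightarrow> 0 \<le> t \<Longrightarrow> t \<le> T \<Longrightarrow> (traj f x0 u t, u t) \<in> E"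
  by (erule admE) auto

lemma traj_initial: "u \<in> adm f E T x0 \<Longrightarrow> 0 \<le> T \<Longrightarrow> traj f x0 u 0 = x0"
  by (erule admE) (auto simp: is_sol_initial)

lemma traj_continuous: "u \<in> adm f E T x0 \<Longrightarrow> continuous_on {0..T} (traj f x0 u)"
  by (erule admE) (auto intro: continuous_on_eq[OF is_sol_continuous])

lemma adm_shift:
  assumes "u \<in> adm f E T x0" "0 \<le> a" "a \<le> T"
  shows "(\<lambda>t. u (t + a)) \<in> adm f E (T - a) (traj f x0 u a)"
    and "\<And>t. 0 \<le> t \<Longrightarrow> t \<le> T - a \<Longrightarrow>
           traj f (traj f x0 u a) (\<lambda>t. u (t + a)) t = traj f x0 u (t + a)"
proof -
  obtain x where x: "Linf_loc u" "is_sol f x0 u T x" "\<And>t. 0 \<le> t \<Longrightarrow> t \<le> T \<Longrightarrow> traj f x0 u t = x t"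
    "\<And>t. 0 \<le> t \<Longrightarrow> t \<le> T \<Longrightarrow> (x t, u t) \<in> E"
    using admE[OF assms(1)] by blast
  have sol: "is_sol f (traj f x0 u a) (\<lambda>t. u (t + a)) (T - a) (\<lambda>t. x (t + a))"
    using is_sol_shift[OF x(2) assms(2,3)] x(3) assms(2,3) by simp
  have lin: "Linf_loc (\<lambda>t. u (t + a))" by (rule Linf_loc_shift[OF x(1) assms(2)])
  show "(\<lambda>t. u (t + a)) \<in> adm f E (T - a) (traj f x0 u a)"
    unfolding adm_def using lin sol x(4) assms(2) by auto
  show "traj f (traj f x0 u a) (\<lambda>t. u (t + a)) t = traj f x0 u (t + a)" if "0 \<le> t" "t \<le> T - a" for t
    using traj_eq[OF lin sol that] x(3) that assms(2) by simp
qed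

lemma adm_append:
  assumes u: "u \<in> adm f E a x0" and v: "v \<in> adm f E b (traj f x0 u a)" and "0 \<le> a" "0 \<le> b"
  shows "(\<lambda>t. if t < a then u t else v (t - a)) \<in> adm f E (a + b) x0"
    and "\<And>t. 0 \<le> t \<Longrightarrow> t \<le> a \<Longrightarrow>
           traj f x0 (\<lambda>t. if t < a then u t else v (t - a)) t = traj f x0 u t"
    and "\<And>t. a \<le> t \<Longrightarrow> t \<le> a + b \<Longrightarrow>
           traj f x0 (\<lambda>t. if t < a then u t else v (t - a)) t = traj f (traj f x0 u a) v (t - a)"
proof -
  let ?w = "\<lambda>t. if t < a then u t else v (t - a)"
  obtain x where x: "Linf_loc u" "is_sol f x0 u a x" "\<And>t. 0 \<le> t \<Longrightarrow> t \<le> a \<Longrightarrow> traj f x0 u t = x t"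
    "\<And>t. 0 \<le> t \<Longrightarrow> t \<le> a \<Longrightarrow> (x t, u t) \<in> E"
    using admE[OF u] by blast
  obtain y where y: "Linf_loc v" "is_sol f (x a) v b y"
    "\<And>t. 0 \<le> t \<Longrightarrow> t \<le> b \<Longrightarrow> traj f (x a) v t = y t"
    "\<And>t. 0 \<le> t \<Longrightarrow> t \<le> b \<Longrightarrow> (y t, v t) \<in> E"
    using admE[OF v] x(3) assms(3) by (metis order_refl)
  let ?z = "\<lambda>t. if t \<le> a then x t else y (t - a)"
  have sol: "is_sol f x0 ?w (a + b) ?z" by (rule is_sol_append[OF x(2) y(2) assms(3,4)])
  have lin: "Linf_loc ?w" by (rule Linf_loc_append[OF x(1) y(1) assms(3)])
  have y0: "y 0 = x a" using is_sol_initial[OF y(2) assms(4)] .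
  have "\<forall>t\<in>{0..a + b}. (?z t, ?w t) \<in> E"
  proof
    fix t assume "t \<in> {0..a + b}"
    then show "(?z t, ?w t) \<in> E"
      using x(4)[of t] y(4)[of "t - a"] y0 by (cases "t < a") auto
  qed
  then show "?w \<in> adm f E (a + b) x0"
    unfolding adm_def by (intro CollectI conjI exI[of _ ?z] lin sol)
  show "traj f x0 ?w t = traj f x0 u t" if "0 \<le> t" "t \<le> a" for t
    using traj_eq[OF lin sol, of t] x(3)[of t] that assms(4) by simp
  show "traj f x0 ?w t = traj f (traj f x0 u a) v (t - a)" if "a \<le> t" "t \<le> a + b" for t
  proof -
    have "?z t = y (t - a)" using y0 that by (cases "t \<le> a") auto
    then show ?thesis
      using traj_eq[OF lin sol, of t] y(3)[of "t - a"] x(3)[of a] that assms(3) by simp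
  qed
qed

lemma cost_measurable:
  assumes "u \<in> adm f E T x0" "0 \<le> T"
  shows "set_borel_measurable lborel {0..T} (\<lambda>s. l (traj f x0 u s) (u s))"
proof -
  obtain x where x: "Linf_loc u" "is_sol f x0 u T x" "\<And>t. 0 \<le> t \<Longrightarrow> t \<le> T \<Longrightarrow> traj f x0 u t = x t"
    "\<And>t. 0 \<le> t \<Longrightarrow> t \<le> T \<Longrightarrow> (x t, u t) \<in> E"
    using admE[OF assms(1)] by blast
  let ?clamp = "\<lambda>s. max 0 (min T s)"
  have "continuous_on UNIV (\<lambda>s. x (?clamp s))"
    by (rule continuous_on_compose2[OF is_sol_continuous[OF x(2)]])
      (use assms(2) in \<open>auto intro!: continuous_intros\<close>)
  then have [measurable]: "(\<lambda>s. x (?clamp s)) \<in> borel_measurable borel"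
    by (rule borel_measurable_continuous_onI)
  have [measurable]: "(\<lambda>t. indicator {0..} t *\<^sub>R u t) \<in> borel_measurable borel"
    by (rule Linf_loc_measurable[OF x(1)])
  have "continuous_on UNIV (\<lambda>p. l (fst p) (snd p))"
    using l_cont by (simp add: case_prod_beta')
  then have "(\<lambda>s. l (x (?clamp s)) (indicator {0..} s *\<^sub>R u s)) \<in> borel_measurable borel"
    by (rule borel_measurable_continuous_Pair[rotated 2]) measurable
  then have "(\<lambda>s. indicator {0..T} s *\<^sub>R l (x (?clamp s)) (indicator {0..} s *\<^sub>R u s))
      \<in> borel_measurable borel"
    by measurable
  also have "(\<lambda>s. indicator {0..T} s *\<^sub>R l (x (?clamp s)) (indicator {0..} s *\<^sub>R u s))
      = (\<lambda>s. indicator {0..T} s *\<^sub>R l (traj f x0 u s) (u s))"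
    using x(3) by (auto split: split_indicator)
  finally show ?thesis
    by (simp add: set_borel_measurable_def)
qed

lemma cost_measurable_interval:
  assumes "u \<in> adm f E T x0" "0 \<le> a" "a \<le> b" "b \<le> T"
  shows "set_borel_measurable lborel {a..b} (\<lambda>s. l (traj f x0 u s) (u s))"
  using set_borel_measurable_subset[OF cost_measurable[OF assms(1)]] assms by auto

lemma Jcost_split:
  assumes "u \<in> adm f E T x0" "0 \<le> a" "a \<le> T"
  shows "Jcost f l T x0 u = Jcost f l a x0 u + tail_cost f l T x0 u a"
  unfolding Jcost_def tail_cost_def
  by (rule set_nn_integral_interval_split[OF cost_measurable_interval[OF assms(1)]])
    (use assms in auto)

lemma Jcost_shift:
  assumes u: "u \<in> adm f E T x0" and "0 \<le> a" "a \<le> T"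
  shows "Jcost f l (T - a) (traj f x0 u a) (\<lambda>t. u (t + a)) = tail_cost f l T x0 u a"
proof -
  let ?H = "\<lambda>s. ennreal (l (traj f x0 u s) (u s)) * indicator {a..T} s"
  have [measurable]: "?H \<in> borel_measurable borel"
    by (rule set_borel_measurable_ennreal[OF cost_measurable_interval[OF u]]) (use assms in auto)
  have "Jcost f l (T - a) (traj f x0 u a) (\<lambda>t. u (t + a)) = (\<integral>\<^sup>+ t. ?H (a + 1 * t) \<partial>lborel)"
    unfolding Jcost_def
    by (rule nn_integral_cong) (use adm_shift(2)[OF assms] in \<open>auto simp: add.commute split: split_indicator\<close>)
  also have "\<dots> = tail_cost f l T x0 u a"
    using nn_integral_real_affine[of ?H 1 a] by (simp add: tail_cost_def)
  finally show ?thesis .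
qed

lemma Jcost_append:
  assumes u: "u \<in> adm f E a x0" and v: "v \<in> adm f E b (traj f x0 u a)" and "0 \<le> a" "0 \<le> b"
  shows "Jcost f l (a + b) x0 (\<lambda>t. if t < a then u t else v (t - a))
       = Jcost f l a x0 u + Jcost f l b (traj f x0 u a) v"
proof -
  let ?w = "\<lambda>t. if t < a then u t else v (t - a)"
  have w: "?w \<in> adm f E (a + b) x0" by (rule adm_append(1)[OF assms])
  have "Jcost f l a x0 ?w = Jcost f l a x0 u"
    unfolding Jcost_def
  proof (rule nn_integral_cong_AE)
    show "AE s in lborel. ennreal (l (traj f x0 ?w s) (?w s)) * indicator {0..a} s
        = ennreal (l (traj f x0 u s) (u s)) * indicator {0..a} s"
      using AE_lborel_singleton[of a]
      by eventually_elim (use adm_append(2)[OF assms] in \<open>auto split: split_indicator\<close>)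
  qed
  moreover have "tail_cost f l (a + b) x0 ?w a = Jcost f l b (traj f x0 u a) v"
  proof -
    have "tail_cost f l (a + b) x0 ?w a = Jcost f l (a + b - a) (traj f x0 ?w a) (\<lambda>t. ?w (t + a))"
      by (rule Jcost_shift[OF w, symmetric]) (use assms in auto)
    moreover have "traj f (traj f x0 ?w a) (\<lambda>t. ?w (t + a)) t = traj f (traj f x0 u a) v t"
      if "0 \<le> t" "t \<le> b" for t
      using adm_shift(2)[OF w, of a t] adm_append(3)[OF assms, of "t + a"] that assms by simp
    ultimately show ?thesis
      unfolding Jcost_def by (auto intro!: nn_integral_cong split: split_indicator)
  qed
  ultimately show ?thesis
    using Jcost_split[OF w] assms by simp
qed

lemma tail_cost_le_Vfun:
  assumes u: "u \<in> adm f E T x0" and opt: "Jcost f l T x0 u = Vfun f E l T x0"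
    and fin: "Vfun f E l T x0 < top" and s: "0 \<le> s" "s \<le> T"
  shows "tail_cost f l T x0 u s \<le> Vfun f E l (T - s) (traj f x0 u s)"
  unfolding Vfun_def
proof (rule INF_greatest)
  fix v assume v: "v \<in> adm f E (T - s) (traj f x0 u s)"
  have us: "u \<in> adm f E s x0" by (rule adm_mono[OF u s(2)])
  have "Jcost f l s x0 u + tail_cost f l T x0 u s = Vfun f E l T x0"
    using Jcost_split[OF u s] opt by simp
  also have "\<dots> \<le> Jcost f l (s + (T - s)) x0 (\<lambda>t. if t < s then u t else v (t - s))"
    using Vfun_le_Jcost[OF adm_append(1)[OF us v]] s by simp
  also have "\<dots> = Jcost f l s x0 u + Jcost f l (T - s) (traj f x0 u s) v"
    by (rule Jcost_append[OF us v]) (use s in auto)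
  finally have "Jcost f l s x0 u + tail_cost f l T x0 u s
      \<le> Jcost f l s x0 u + Jcost f l (T - s) (traj f x0 u s) v" .
  moreover have "Jcost f l s x0 u < top"
    using Jcost_mono[OF s(2), of f l x0 u] opt fin by simp
  ultimately show "tail_cost f l T x0 u s \<le> Jcost f l (T - s) (traj f x0 u s) v"
    by (auto simp: ennreal_add_left_cancel_le)
qed

(* Follow u up to time s, then an almost optimal infinite-horizon input. *)
lemma Vfun_traj_le:
  assumes u: "u \<in> adm f E T x0" and "0 \<le> a" "a \<le> s" "s \<le> T"
  shows "Vfun f E l T (traj f x0 u a) \<le> tail_cost f l T x0 u a + Vfun_inf f E l (traj f x0 u s)"
proof -
  have step: "Vfun f E l T (traj f x0 u a) \<le> tail_cost f l T x0 u a + Jcost_inf f l (traj f x0 u s) v"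
    if v: "v \<in> adm_inf f E (traj f x0 u s)" for v
  proof -
    let ?u1 = "\<lambda>t. u (t + a)"
    let ?w = "\<lambda>t. if t < s - a then ?u1 t else v (t - (s - a))"
    have us: "u \<in> adm f E s x0" by (rule adm_mono[OF u assms(4)])
    have u1: "?u1 \<in> adm f E (s - a) (traj f x0 u a)"
      by (rule adm_shift(1)[OF us]) (use assms in auto)
    have u1_end: "traj f (traj f x0 u a) ?u1 (s - a) = traj f x0 u s"
      using adm_shift(2)[OF us, of a "s - a"] assms by simp
    have v': "v \<in> adm f E (T - (s - a)) (traj f (traj f x0 u a) ?u1 (s - a))"
      unfolding u1_end by (rule adm_inf_imp_adm[OF v]) (use assms in simp)
    have horizons: "0 \<le> s - a" "0 \<le> T - (s - a)" "(s - a) + (T - (s - a)) = T"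
      using assms by auto
    have "Vfun f E l T (traj f x0 u a) \<le> Jcost f l T (traj f x0 u a) ?w"
      using Vfun_le_Jcost[OF adm_append(1)[OF u1 v' horizons(1,2)]] unfolding horizons(3) .
    also have "\<dots> = Jcost f l (s - a) (traj f x0 u a) ?u1 + Jcost f l (T - (s - a)) (traj f x0 u s) v"
      using Jcost_append[OF u1 v' horizons(1,2)] unfolding horizons(3) u1_end .
    also have "\<dots> \<le> tail_cost f l T x0 u a + Jcost_inf f l (traj f x0 u s) v"
    proof (rule add_mono)
      have "Jcost f l (s - a) (traj f x0 u a) ?u1 = tail_cost f l s x0 u a"
        by (rule Jcost_shift[OF us]) (use assms in auto)
      also have "\<dots> \<le> tail_cost f l T x0 u a"
        unfolding tail_cost_def using assms(4)
        by (intro nn_integral_mono) (auto split: split_indicator)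
      finally show "Jcost f l (s - a) (traj f x0 u a) ?u1 \<le> tail_cost f l T x0 u a" .
    qed (rule Jcost_le_Jcost_inf)
    finally show ?thesis .
  qed
  show ?thesis
  proof (rule ennreal_le_epsilon)
    fix e :: real
    assume fin: "tail_cost f l T x0 u a + Vfun_inf f E l (traj f x0 u s) < top" and "0 < e"
    have V_fin: "Vfun_inf f E l (traj f x0 u s) \<noteq> \<infinity>"
    proof
      assume "Vfun_inf f E l (traj f x0 u s) = \<infinity>"
      with fin show False by simp
    qed
    then obtain v where v: "v \<in> adm_inf f E (traj f x0 u s)"
      "Jcost_inf f l (traj f x0 u s) v < Vfun_inf f E l (traj f x0 u s) + e"
      using INF_approx_ennreal[OF \<open>0 < e\<close> Vfun_inf_def V_fin] by blast
    have "Vfun f E l T (traj f x0 u a) \<le> tail_cost f l T x0 u a + Jcost_inf f l (traj f x0 u s) v"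
      by (rule step[OF v(1)])
    also have "\<dots> \<le> tail_cost f l T x0 u a + (Vfun_inf f E l (traj f x0 u s) + e)"
      using v(2) by (intro add_left_mono less_imp_le)
    finally show "Vfun f E l T (traj f x0 u a) \<le> tail_cost f l T x0 u a + Vfun_inf f E l (traj f x0 u s) + e"
      by (simp add: add.assoc)
  qed
qed

lemma ellstar_le: "(x, v) \<in> E \<Longrightarrow> ellstar E l x \<le> l x v"
  unfolding ellstar_def
  by (rule cInf_lower) (auto simp: Uset_def intro!: bdd_belowI[of _ 0] l_nonneg)

lemma ellstar_nonneg: "x \<in> Xset E \<Longrightarrow> 0 \<le> ellstar E l x"
  unfolding ellstar_def Xset_def by (rule cInf_greatest) (auto intro: l_nonneg)

lemma traj_mem_Xset: "u \<in> adm f E T x0 \<Longrightarrow> 0 \<le> t \<Longrightarrow> t \<le> T \<Longrightarrow> traj f x0 u t \<in> Xset E"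
  by (drule traj_mem_E) (auto simp: Xset_def Uset_def)

lemma traj_eq_if_Jcost_eq_0:
  assumes u: "u \<in> adm f E T x0" and "0 < T" and zero: "Jcost f l T x0 u = 0"
    and target: "\<And>x v. (x, v) \<in> E \<Longrightarrow> l x v \<le> 0 \<Longrightarrow> x = z"
  shows "traj f x0 u T = z"
proof -
  let ?Z = "{s \<in> {0..T}. traj f x0 u s = z}"
  have "closed ?Z"
    by (rule closedin_closed_trans[OF continuous_closedin_preimage_constant[OF traj_continuous[OF u]]]) simp
  moreover have "\<exists>s\<in>?Z. dist s T < e" if "0 < e" for e
  proof -
    define p where "p = max 0 (T - e / 2)"
    have p: "0 \<le> p" "p < T" "T - p < e"
      using \<open>0 < T\<close> that by (auto simp: p_def)
    have "(\<integral>\<^sup>+ r\<in>{p..T}. ennreal (l (traj f x0 u r) (u r)) \<partial>lborel) \<le> Jcost f l T x0 u"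
      unfolding Jcost_def using p by (intro nn_integral_mono) (auto split: split_indicator)
    with zero have "(\<integral>\<^sup>+ r\<in>{p..T}. ennreal (l (traj f x0 u r) (u r)) \<partial>lborel) \<le> ennreal (0 * (T - p))"
      by simp
    then obtain s where s: "s \<in> {p..T}" "l (traj f x0 u s) (u s) \<le> 0"
      using ex_le_of_set_nn_integral_le[OF cost_measurable_interval[OF u]] p by force
    then have "s \<in> ?Z"
      using target[OF traj_mem_E[OF u]] p by auto
    moreover have "dist s T < e"
      using s p by (auto simp: dist_real_def)
    ultimately show ?thesis by blast
  qed
  ultimately have "T \<in> ?Z"
    using closed_approachable by blast
  then show ?thesis by simp
qed

end

section \<open>One step of the MPC scheme\<close>

locale mpc_setting = optimal_control +
  fixes xbar :: "'a::euclidean_space" and Nset :: "'a set" and gamma C CM beta :: real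
    and eta1 eta2 :: "real \<Rightarrow> real"
  assumes xbar_Xset: "xbar \<in> Xset E"
    and eta1: "class_K_inf eta1" and eta2: "class_K_inf eta2"
    and ellstar_bounds: "\<And>x. x \<in> Xset E \<Longrightarrow> eta1 (norm (x - xbar)) \<le> ellstar E l x
                           \<and> ellstar E l x \<le> eta2 (norm (x - xbar))"
    and gamma_pos: "0 < gamma" and xbar_interior: "xbar \<in> interior Nset"
    and Vfun_inf_le: "\<And>x. x \<in> Nset \<inter> Xset E \<Longrightarrow> Vfun_inf f E l x \<le> ennreal (gamma * ellstar E l x)"
    and C_pos: "0 < C"
    and CM_def: "CM = (if Xset E - Nset = {} then 0 else C / Inf (ellstar E l ` (Xset E - Nset)))"
    and beta_def: "beta = max CM gamma"
begin

lemma beta_ge: "gamma \<le> beta" "CM \<le> beta" and beta_pos: "0 < beta"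
  using beta_def gamma_pos by auto

lemma eta1_pos: "0 < r \<Longrightarrow> 0 < eta1 r"
  using eta1 strict_mono_onD[of "{0..}" eta1 0 r] by (auto simp: class_K_inf_def)

lemma eq_xbar_if_cost_nonpos:
  assumes "(x, v) \<in> E" "l x v \<le> 0" shows "x = xbar"
proof -
  have "x \<in> Xset E" using assms(1) by (auto simp: Xset_def Uset_def)
  then have "eta1 (norm (x - xbar)) \<le> 0"
    using ellstar_bounds ellstar_le[OF assms(1)] assms(2) by fastforce
  then show ?thesis
    using eta1_pos[of "norm (x - xbar)"] by force
qed

lemma ellstar_xbar: "ellstar E l xbar = 0"
  using ellstar_bounds[OF xbar_Xset] ellstar_nonneg[OF xbar_Xset] eta2
  by (auto simp: class_K_inf_def)

lemma C_le_CM_mult_ellstar: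
  assumes x: "x \<in> Xset E - Nset" shows "C \<le> CM * ellstar E l x"
proof -
  obtain e where e: "0 < e" "ball xbar e \<subseteq> Nset"
    using xbar_interior mem_interior by blast
  have far: "eta1 e \<le> ellstar E l y" if "y \<in> Xset E - Nset" for y
  proof -
    have "y \<notin> ball xbar e"
      using that e by auto
    then have "e \<le> norm (y - xbar)"
      by (simp add: dist_norm norm_minus_commute)
    then have "eta1 e \<le> eta1 (norm (y - xbar))"
      using eta1 e(1) by (auto simp: class_K_inf_def intro: strict_mono_on_leD)
    also have "\<dots> \<le> ellstar E l y"
      using ellstar_bounds that by blast
    finally show ?thesis .
  qed
  define M where "M = Inf (ellstar E l ` (Xset E - Nset))"
  have "eta1 e \<le> M"
    unfolding M_def using x far by (intro cInf_greatest) auto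
  then have "0 < M" using eta1_pos[OF e(1)] by linarith
  moreover have "M \<le> ellstar E l x"
    unfolding M_def using x far by (intro cInf_lower bdd_belowI[of _ "eta1 e"]) auto
  ultimately show ?thesis
    using x CM_def C_pos by (auto simp: M_def field_simps)
qed

lemma CM_nonneg: "0 \<le> CM"
proof (cases "Xset E - Nset = {}")
  case False
  then obtain x where x: "x \<in> Xset E - Nset" by blast
  have "0 < CM * ellstar E l x"
    using C_le_CM_mult_ellstar[OF x] C_pos by linarith
  with ellstar_nonneg[of x] x show ?thesis
    by (auto simp: zero_less_mult_iff)
qed (simp add: CM_def)

lemma tail_cost_le_beta_ellstar:
  assumes u: "u \<in> adm f E T x0" and opt: "Jcost f l T x0 u = Vfun f E l T x0"
    and VC: "Vfun f E l T x0 \<le> ennreal C" and s: "0 \<le> s" "s \<le> T"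
  shows "tail_cost f l T x0 u s \<le> ennreal (beta * ellstar E l (traj f x0 u s))"
proof -
  let ?x = "traj f x0 u s"
  have X: "?x \<in> Xset E" by (rule traj_mem_Xset[OF u s])
  have ell: "0 \<le> ellstar E l ?x" by (rule ellstar_nonneg[OF X])
  show ?thesis
  proof (cases "?x \<in> Nset")
    case True
    have "tail_cost f l T x0 u s \<le> Vfun f E l (T - s) ?x"
      using VC by (intro tail_cost_le_Vfun[OF u opt _ s]) (simp add: le_less_trans)
    also have "\<dots> \<le> Vfun_inf f E l ?x"
      using s by (intro Vfun_le_Vfun_inf) simp
    also have "\<dots> \<le> ennreal (gamma * ellstar E l ?x)"
      using Vfun_inf_le True X by blast
    also have "\<dots> \<le> ennreal (beta * ellstar E l ?x)"
      using ell beta_ge by (intro ennreal_leI mult_right_mono) auto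
    finally show ?thesis .
  next
    case False
    have "tail_cost f l T x0 u s \<le> tail_cost f l T x0 u 0"
      by (rule tail_cost_antimono[OF s(1)])
    also have "\<dots> = Vfun f E l T x0"
      using opt by (simp add: tail_cost_def Jcost_def)
    also have "\<dots> \<le> ennreal (CM * ellstar E l ?x)"
      using VC C_le_CM_mult_ellstar[of ?x] False X by (auto intro: order.trans ennreal_leI)
    also have "\<dots> \<le> ennreal (beta * ellstar E l ?x)"
      using ell beta_ge by (intro ennreal_leI mult_right_mono) auto
    finally show ?thesis .
  qed
qed

end

locale mpc_step = mpc_setting +
  fixes delta :: real and N :: nat and Cbar alpha :: real
    and xh :: "'a::euclidean_space" and ustar :: "real \<Rightarrow> 'b::euclidean_space"
  assumes delta_pos: "0 < delta" and delta_less_beta: "delta < beta" and N_pos: "1 \<le> N"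
    and Cbar_pos: "0 < Cbar"
    and ellstar_xh: "ennreal (delta * ellstar E l xh) \<le> ennreal Cbar * Vfun f E l delta xh"
      \<comment> \<open>the only instance of (A3) that is needed\<close>
    and cond: "max (CM / delta) (Cbar * (beta / delta)^2) * (beta / (beta + delta)) ^ (N - 1) < 1"
    and alpha_def: "alpha = Cbar * (beta / delta)^2 * (beta / (beta + delta)) ^ (N - 1)"
    and Vfun_xh_le: "Vfun f E l (real N * delta) xh \<le> ennreal C"
    and ustar_adm: "ustar \<in> adm f E (real N * delta) xh"
    and ustar_opt: "Jcost f l (real N * delta) xh ustar = Vfun f E l (real N * delta) xh"
begin

abbreviation "T \<equiv> real N * delta"
abbreviation "rho \<equiv> beta / (beta + delta)"
abbreviation "W \<equiv> tail_cost f l T xh ustar"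
abbreviation "stage s \<equiv> l (traj f xh ustar s) (ustar s)"
abbreviation "first_cost \<equiv> enn2real (Jcost f l delta xh ustar)"

lemma delta_le_T: "delta \<le> T"
  using N_pos delta_pos by simp

lemma tail_cost_0: "W 0 = Vfun f E l T xh"
  using ustar_opt by (simp add: tail_cost_def Jcost_def)

lemma tail_cost_le_C: "0 \<le> s \<Longrightarrow> W s \<le> ennreal C"
  using tail_cost_antimono[of 0 s f l T xh ustar] tail_cost_0 Vfun_xh_le by simp

lemma tail_cost_finite: "0 \<le> s \<Longrightarrow> W s = ennreal (enn2real (W s))"
  using le_less_trans[OF tail_cost_le_C ennreal_less_top] by simp

lemma tail_cost_0_split: "W 0 = Jcost f l delta xh ustar + W delta"
  using Jcost_split[OF ustar_adm, of delta] delta_pos delta_le_T tail_cost_0 ustar_opt by simp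

lemma first_cost_eq: "Jcost f l delta xh ustar = ennreal first_cost"
  and first_cost_le: "first_cost \<le> enn2real (W 0)"
proof -
  have le: "Jcost f l delta xh ustar \<le> W 0"
    using tail_cost_0_split by simp
  also have "\<dots> \<le> ennreal C"
    by (rule tail_cost_le_C) simp
  finally have "Jcost f l delta xh ustar < top"
    using le_less_trans[OF _ ennreal_less_top] by blast
  then show "Jcost f l delta xh ustar = ennreal first_cost"
    by simp
  show "first_cost \<le> enn2real (W 0)"
    using le tail_cost_le_C[of 0] by (intro enn2real_mono) (auto simp: le_less_trans)
qed

lemma tail_cost_le_beta_stage:
  assumes "0 \<le> s" "s \<le> T" shows "W s \<le> ennreal (beta * stage s)"
proof -
  have "W s \<le> ennreal (beta * ellstar E l (traj f xh ustar s))"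
    by (rule tail_cost_le_beta_ellstar[OF ustar_adm ustar_opt Vfun_xh_le assms])
  also have "\<dots> \<le> ennreal (beta * stage s)"
    using ellstar_le[OF traj_mem_E[OF ustar_adm assms]] beta_pos
    by (intro ennreal_leI mult_left_mono) auto
  finally show ?thesis .
qed

lemma tail_cost_0_le: "enn2real (W 0) \<le> beta * ellstar E l xh"
  using tail_cost_le_beta_ellstar[OF ustar_adm ustar_opt Vfun_xh_le, of 0] delta_le_T delta_pos
    traj_initial[OF ustar_adm] beta_pos ellstar_nonneg[OF traj_mem_Xset[OF ustar_adm, of 0]]
  by (intro enn2real_leI) auto

lemma ellstar_xh_le: "delta * ellstar E l xh \<le> Cbar * first_cost"
proof -
  have "ennreal (delta * ellstar E l xh) \<le> ennreal Cbar * Vfun f E l delta xh"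
    by (rule ellstar_xh)
  also have "\<dots> \<le> ennreal Cbar * Jcost f l delta xh ustar"
    using Vfun_le_Jcost[OF adm_mono[OF ustar_adm delta_le_T]] by (rule mult_left_mono) simp
  also have "\<dots> = ennreal (Cbar * first_cost)"
    using Cbar_pos first_cost_eq by (simp add: ennreal_mult)
  finally show ?thesis
    using Cbar_pos by (simp add: ennreal_le_iff)
qed

lemma tail_cost_decay: "enn2real (W (T - delta)) \<le> rho ^ (N - 1) * enn2real (W 0)"
proof -
  have "real (N - 1) * delta = T - delta"
    using N_pos by (simp add: of_nat_diff algebra_simps)
  then have "W (T - delta) \<le> ennreal (rho ^ (N - 1)) * W 0"
    using tail_integral_geometric_decay[OF cost_measurable[OF ustar_adm] _ beta_pos delta_pos, of "N - 1"]
      tail_cost_le_beta_stage delta_le_T delta_pos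
    unfolding tail_cost_def by simp
  also have "\<dots> = ennreal (rho ^ (N - 1) * enn2real (W 0))"
    using tail_cost_finite[of 0] beta_pos delta_pos by (subst ennreal_mult) auto
  finally show ?thesis
    using beta_pos delta_pos by (intro enn2real_leI) auto
qed

lemma alpha_nonneg: "0 \<le> alpha" and alpha_less_1: "alpha < 1"
proof -
  show "0 \<le> alpha"
    using alpha_def Cbar_pos beta_pos delta_pos by simp
  have "alpha \<le> max (CM / delta) (Cbar * (beta / delta)^2) * rho ^ (N - 1)"
    unfolding alpha_def using beta_pos delta_pos by (intro mult_right_mono) auto
  then show "alpha < 1" using cond by linarith
qed

lemma terminal_tail_cost_bounds:
  shows "CM * enn2real (W (T - delta)) < delta * C"
    and "gamma * enn2real (W (T - delta)) \<le> delta * alpha * first_cost"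
proof -
  define w where "w = enn2real (W (T - delta))"
  define \<kappa> where "\<kappa> = rho ^ (N - 1)"
  have \<kappa>: "0 \<le> \<kappa>" using beta_pos delta_pos by (simp add: \<kappa>_def)
  have w_le: "w \<le> \<kappa> * enn2real (W 0)"
    unfolding w_def \<kappa>_def by (rule tail_cost_decay)
  have "enn2real (W 0) \<le> C"
    using tail_cost_le_C[of 0] C_pos by (intro enn2real_leI) auto
  with w_le \<kappa> have "w \<le> \<kappa> * C"
    by (meson mult_left_mono order_trans)
  then have "CM * w \<le> CM * \<kappa> * C"
    using CM_nonneg by (simp add: mult.assoc mult_left_mono)
  also have "\<dots> < delta * C"
  proof -
    have "CM / delta * \<kappa> < 1"
      using cond \<kappa> unfolding \<kappa>_def by (meson max.cobounded1 mult_right_mono le_less_trans)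
    then have "CM * \<kappa> < delta" using delta_pos by (simp add: field_simps)
    then show ?thesis using C_pos by simp
  qed
  finally show "CM * enn2real (W (T - delta)) < delta * C"
    unfolding w_def .
  have "delta * (gamma * w) \<le> delta * (beta * (\<kappa> * (beta * ellstar E l xh)))"
  proof -
    have "w \<le> \<kappa> * (beta * ellstar E l xh)"
      using w_le tail_cost_0_le \<kappa> by (meson mult_left_mono order_trans)
    then show ?thesis
      using beta_ge(1) gamma_pos beta_pos delta_pos
      by (intro mult_left_mono mult_mono) (auto simp: w_def)
  qed
  also have "\<dots> = beta\<^sup>2 * \<kappa> * (delta * ellstar E l xh)"
    by (simp add: algebra_simps power2_eq_square)
  also have "\<dots> \<le> beta\<^sup>2 * \<kappa> * (Cbar * first_cost)"
    using ellstar_xh_le \<kappa> by (intro mult_left_mono) auto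
  also have "\<dots> = delta * (delta * alpha * first_cost)"
    using delta_pos by (simp add: alpha_def \<kappa>_def field_simps power2_eq_square)
  finally show "gamma * enn2real (W (T - delta)) \<le> delta * alpha * first_cost"
    using delta_pos by (simp add: w_def)
qed

(* For N = 1 the last sampling interval is the first one, so no time s \<ge> delta is available for
   averaging; instead the condition forces l*(xh) = 0 and the optimal trajectory stays at xbar. *)
lemma Vfun_next_eq_0_if_N_eq_1:
  assumes "N = 1" shows "Vfun f E l T (traj f xh ustar delta) = 0"
proof -
  have T: "T = delta" using assms by simp
  have "ellstar E l xh = 0"
  proof (rule ccontr)
    assume "ellstar E l xh \<noteq> 0"
    then have pos: "0 < ellstar E l xh"
      using ellstar_nonneg[OF traj_mem_Xset[OF ustar_adm, of 0]] traj_initial[OF ustar_adm] delta_pos T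
      by fastforce
    have "delta * ellstar E l xh \<le> Cbar * (beta * ellstar E l xh)"
      using ellstar_xh_le first_cost_le tail_cost_0_le Cbar_pos
      by (meson mult_left_mono order_trans less_imp_le)
    then have "delta \<le> Cbar * beta" using pos by (simp add: mult.assoc[symmetric])
    moreover have "Cbar * beta * beta < delta * delta"
      using cond assms delta_pos by (simp add: power2_eq_square field_simps)
    ultimately have "delta * beta < delta * delta"
      using beta_pos by (meson le_less_trans mult_right_mono less_imp_le)
    with delta_less_beta delta_pos show False by simp
  qed
  then have "enn2real (W 0) \<le> 0"
    using tail_cost_0_le by simp
  then have "enn2real (W 0) = 0"
    using enn2real_nonneg by (rule antisym)
  then have "Jcost f l T xh ustar = 0"
    using tail_cost_finite[of 0] tail_cost_0 ustar_opt by (metis ennreal_0 order_refl)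
  then have "traj f xh ustar T = xbar"
    using delta_pos N_pos eq_xbar_if_cost_nonpos
    by (intro traj_eq_if_Jcost_eq_0[OF ustar_adm]) auto
  then have "Vfun f E l T (traj f xh ustar delta) \<le> ennreal (gamma * ellstar E l xbar)"
    using Vfun_le_Vfun_inf Vfun_inf_le xbar_interior interior_subset xbar_Xset T delta_pos
    by (metis IntI less_imp_le order_trans subsetD)
  then show ?thesis by (simp add: ellstar_xbar)
qed

lemma exists_time_in_Nset:
  assumes "2 \<le> N"
  obtains s where "delta \<le> s" "s \<le> T" "traj f xh ustar s \<in> Nset"
    "gamma * ellstar E l (traj f xh ustar s) \<le> alpha * first_cost"
proof -
  define c where "c = enn2real (W (T - delta)) / delta"
  have c: "0 \<le> c" "c * (T - (T - delta)) = enn2real (W (T - delta))"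
    using delta_pos by (auto simp: c_def)
  have Td: "delta \<le> T - delta"
    using assms delta_pos mult_right_mono[of 2 "real N" delta] by simp
  have meas: "set_borel_measurable lborel {T - delta..T} (\<lambda>r. stage r)"
    by (rule cost_measurable_interval[OF ustar_adm]) (use Td delta_pos in auto)
  have "(\<integral>\<^sup>+ r\<in>{T - delta..T}. ennreal (stage r) \<partial>lborel) \<le> ennreal (c * (T - (T - delta)))"
    using tail_cost_finite[of "T - delta"] Td delta_pos unfolding c(2) tail_cost_def by simp
  then obtain s where s: "T - delta \<le> s" "s \<le> T" "stage s \<le> c"
    using ex_le_of_set_nn_integral_le[OF meas _ c(1)] delta_pos by auto
  have range: "0 \<le> s" "delta \<le> s"
    using s(1) Td delta_pos by linarith+
  have X: "traj f xh ustar s \<in> Xset E"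
    by (rule traj_mem_Xset[OF ustar_adm range(1) s(2)])
  have ell: "ellstar E l (traj f xh ustar s) \<le> c"
    using ellstar_le[OF traj_mem_E[OF ustar_adm range(1) s(2)]] s(3) by simp
  have "traj f xh ustar s \<in> Nset"
  proof (rule ccontr)
    assume "traj f xh ustar s \<notin> Nset"
    then have "C \<le> CM * ellstar E l (traj f xh ustar s)"
      using C_le_CM_mult_ellstar X by blast
    also have "\<dots> \<le> CM * c"
      using ell CM_nonneg by (rule mult_left_mono)
    also have "\<dots> < C"
      using terminal_tail_cost_bounds(1) delta_pos by (simp add: c_def field_simps)
    finally show False by simp
  qed
  moreover have "gamma * ellstar E l (traj f xh ustar s) \<le> alpha * first_cost"
  proof -
    have "gamma * ellstar E l (traj f xh ustar s) \<le> gamma * c"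
      using ell gamma_pos by simp
    also have "\<dots> \<le> alpha * first_cost"
      using terminal_tail_cost_bounds(2) delta_pos by (simp add: c_def field_simps)
    finally show ?thesis .
  qed
  ultimately show ?thesis
    using that range(2) s(2) by blast
qed

lemma Vfun_next_le: "Vfun f E l T (traj f xh ustar delta) \<le> W delta + ennreal (alpha * first_cost)"
proof (cases "N = 1")
  case False
  then obtain s where s: "delta \<le> s" "s \<le> T" "traj f xh ustar s \<in> Nset"
    "gamma * ellstar E l (traj f xh ustar s) \<le> alpha * first_cost"
    using exists_time_in_Nset N_pos by force
  have "Vfun f E l T (traj f xh ustar delta) \<le> W delta + Vfun_inf f E l (traj f xh ustar s)"
    using delta_pos s by (intro Vfun_traj_le[OF ustar_adm]) auto
  also have "\<dots> \<le> W delta + ennreal (alpha * first_cost)"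
  proof (rule add_left_mono)
    have "traj f xh ustar s \<in> Nset \<inter> Xset E"
      using s delta_pos traj_mem_Xset[OF ustar_adm] by auto
    then have "Vfun_inf f E l (traj f xh ustar s) \<le> ennreal (gamma * ellstar E l (traj f xh ustar s))"
      by (rule Vfun_inf_le)
    also have "\<dots> \<le> ennreal (alpha * first_cost)"
      using s(4) by (rule ennreal_leI)
    finally show "Vfun_inf f E l (traj f xh ustar s) \<le> ennreal (alpha * first_cost)" .
  qed
  finally show ?thesis .
next
  case True
  then show ?thesis using Vfun_next_eq_0_if_N_eq_1 by simp
qed

lemma one_step_decrease:
  "Vfun f E l T (traj f xh ustar delta) + ennreal (1 - alpha) * Jcost f l delta xh ustar
     \<le> Vfun f E l T xh"
proof -
  have "ennreal (1 - alpha) * Jcost f l delta xh ustar = ennreal ((1 - alpha) * first_cost)"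
    using first_cost_eq alpha_less_1 by (simp add: ennreal_mult)
  then have "Vfun f E l T (traj f xh ustar delta) + ennreal (1 - alpha) * Jcost f l delta xh ustar
      \<le> W delta + (ennreal (alpha * first_cost) + ennreal ((1 - alpha) * first_cost))"
    using Vfun_next_le by (simp add: add.assoc add_right_mono)
  also have "ennreal (alpha * first_cost) + ennreal ((1 - alpha) * first_cost)
      = ennreal (alpha * first_cost + (1 - alpha) * first_cost)"
    using alpha_nonneg alpha_less_1 by (intro ennreal_plus[symmetric]) auto
  also have "alpha * first_cost + (1 - alpha) * first_cost = first_cost"
    by (simp add: algebra_simps)
  also have "W delta + ennreal first_cost = Vfun f E l T xh"
    using tail_cost_0_split tail_cost_0 first_cost_eq by (simp add: add.commute)
  finally show ?thesis .
qed

end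

theorem theorem1:
  fixes f :: "real^'n \<Rightarrow> real^'m \<Rightarrow> real^'n"
    and E :: "((real^'n) \<times> (real^'m)) set"
    and l :: "real^'n \<Rightarrow> real^'m \<Rightarrow> real"
    and xbar :: "real^'n" and ubar :: "real^'m"
    and C gamma delta Cbar CM beta alpha :: real
    and Nset :: "(real^'n) set"
    and N :: nat
    and eta1 eta2 :: "real \<Rightarrow> real"
  assumes f_cont: "continuous_on UNIV (\<lambda>(x, u). f x u)"
    and f_lip: "local_lipschitz UNIV (- {0}) (\<lambda>u x. f x u)"
    and uniq: "\<And>x0 u T x y. Linf_loc u \<Longrightarrow> is_sol f x0 u T x \<Longrightarrow> is_sol f x0 u T y
                 \<Longrightarrow> \<forall>t\<in>{0..T}. x t = y t"
    and l_cont: "continuous_on UNIV (\<lambda>(x, u). l x u)"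
    and l_nonneg: "\<And>x u. l x u \<ge> 0"
    and minimiser_exists: "\<And>T x0. T > 0 \<Longrightarrow> x0 \<in> Xset E \<Longrightarrow> adm f E T x0 \<noteq> {} \<Longrightarrow>
                 \<exists>u\<in>adm f E T x0. Jcost f l T x0 u = Vfun f E l T x0"
    and equil: "xbar \<in> Xset E" "ubar \<in> Uset E xbar" "f xbar ubar = 0"
    and C_pos: "C > 0"
    and A1: "class_K_inf eta1" "class_K_inf eta2"
            "\<And>x. x \<in> Xset E \<Longrightarrow> eta1 (norm (x - xbar)) \<le> ellstar E l x
                  \<and> ellstar E l x \<le> eta2 (norm (x - xbar))"
    and A2: "gamma > 0" "xbar \<in> interior Nset"
            "\<And>x. x \<in> Nset \<inter> Xset E \<Longrightarrow> Vfun_inf f E l x \<le> ennreal (gamma * ellstar E l x)"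
    and CM_def: "CM = (if Xset E - Nset = {} then 0
                       else C / Inf (ellstar E l ` (Xset E - Nset)))"
    and beta_def: "beta = max CM gamma"
    and delta: "0 < delta" "delta < beta"
    and N_pos: "N \<ge> 1"
    and A3: "Cbar > 0"
            "\<And>d xh. d \<in> {0<..real N * delta} \<Longrightarrow> xh \<in> sublevel f E l (real N * delta) C \<Longrightarrow>
                 ennreal (d * ellstar E l xh) \<le> ennreal Cbar * Vfun f E l d xh"
    and cond: "max (CM / delta) (Cbar * (beta / delta)^2) * (beta / (beta + delta)) ^ (N - 1) < 1"
    and alpha_def: "alpha = Cbar * (beta / delta)^2 * (beta / (beta + delta)) ^ (N - 1)"
  shows "\<forall>xh \<in> sublevel f E l (real N * delta) C. \<forall>ustar \<in> adm f E (real N * delta) xh.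
           Jcost f l (real N * delta) xh ustar = Vfun f E l (real N * delta) xh \<longrightarrow>
           Vfun f E l (real N * delta) (traj f xh ustar delta)
             + ennreal (1 - alpha) * (\<integral>\<^sup>+ s \<in> {0..delta}. ennreal (l (traj f xh ustar s) (ustar s)) \<partial>lborel)
           \<le> Vfun f E l (real N * delta) xh"
proof (intro ballI impI)
  fix xh ustar
  assume xh: "xh \<in> sublevel f E l (real N * delta) C"
    and ustar: "ustar \<in> adm f E (real N * delta) xh"
    and opt: "Jcost f l (real N * delta) xh ustar = Vfun f E l (real N * delta) xh"
  interpret mpc_step f E l xbar Nset gamma C CM beta eta1 eta2 delta N Cbar alpha xh ustar
  proof unfold_locales
    show "ennreal (delta * ellstar E l xh) \<le> ennreal Cbar * Vfun f E l delta xh"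
      using A3(2)[OF _ xh] delta N_pos by simp
    show "Vfun f E l (real N * delta) xh \<le> ennreal C"
      using xh by (simp add: sublevel_def)
  qed (fact uniq l_cont l_nonneg equil(1) A1 A2 C_pos CM_def beta_def delta N_pos A3(1) cond
         alpha_def ustar opt)+
  show "Vfun f E l (real N * delta) (traj f xh ustar delta)
      + ennreal (1 - alpha) * (\<integral>\<^sup>+ s \<in> {0..delta}. ennreal (l (traj f xh ustar s) (ustar s)) \<partial>lborel)
      \<le> Vfun f E l (real N * delta) xh"
    using one_step_decrease unfolding Jcost_def .
qed

end
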